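(* Let $V\colon\mathbb{R}\to\mathbb{R}$ be continuous with $\inf_{\mathbb{R}}V>0$ and coercive, i.e. $V(x)\to+\infty$ as $|x|\to+\infty$. Suppose the distributional derivative $V'$ of $V$ is a function satisfying, for some constant $C>0$, \[ |V'(x)|\le C\,V^{3/2}(x)\quad\text{for a.e. }x\in\mathbb{R}. \] Then $H^1_V(\mathbb{R})$ is compactly embedded into $L^\infty(\mathbb{R})$ and into $L^\tau_V(\mathbb{R})$ for all $\tau>2$.
   Context: $H^1_V(\mathbb{R})$ is the completion of $C_0^\infty(\mathbb{R})$ with respect to the norm $\|u\|_V=\left(\int_{\mathbb{R}}(|u'|^2+V(x)|u|^2)\,dx\right)^{1/2}$. $L^\tau_V(\mathbb{R})$ is the space of measurable $u$ with $\int_{\mathbb{R}}V(x)|u|^\tau dx<+\infty$, normed by $\left(\int V|u|^\tau\right)^{1/\tau}$. *)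

theory Defs
  imports "HOL-Analysis.Analysis"
begin

definition test_fun :: "(real \<Rightarrow> real) \<Rightarrow> bool" where
  "test_fun \<phi> \<longleftrightarrow>
     (\<forall>k x. ((deriv ^^ k) \<phi>) differentiable (at x)) \<and>
     compact (closure {x. \<phi> x \<noteq> 0})"

text \<open>The space H^1_V(R), realised as the completion of the test functions w.r.t.
  the norm (int |u'|^2 + V |u|^2)^(1/2): an element is a pair (u, g) (function,
  its derivative) that is the limit, in L^2 x L^2_V, of pairs (phi_n, phi_n')
  with phi_n test functions.  This is the closure of the isometric image of the
  test functions in the complete space L^2 x L^2_V, i.e. the completion.\<close>
definition H1V :: "(real \<Rightarrow> real) \<Rightarrow> ((real \<Rightarrow> real) \<times> (real \<Rightarrow> real)) set" where
  "H1V V = {(u, g). u \<in> borel_measurable lborel \<and> g \<in> borel_measurable lborel \<and>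
     (\<integral>\<^sup>+x. ennreal ((g x)\<^sup>2 + V x * (u x)\<^sup>2) \<partial>lborel) < \<infinity> \<and>
     (\<exists>\<phi>::nat \<Rightarrow> real \<Rightarrow> real. (\<forall>n. test_fun (\<phi> n)) \<and>
        ((\<lambda>n. \<integral>\<^sup>+x. ennreal ((deriv (\<phi> n) x - g x)\<^sup>2 + V x * (\<phi> n x - u x)\<^sup>2) \<partial>lborel)
           \<longlonglongrightarrow> 0))}"

definition H1V_norm :: "(real \<Rightarrow> real) \<Rightarrow> (real \<Rightarrow> real) \<times> (real \<Rightarrow> real) \<Rightarrow> real" where
  "H1V_norm V ug = sqrt (enn2real (\<integral>\<^sup>+x. ennreal ((snd ug x)\<^sup>2 + V x * (fst ug x)\<^sup>2) \<partial>lborel))"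

definition LtauV_int :: "(real \<Rightarrow> real) \<Rightarrow> real \<Rightarrow> (real \<Rightarrow> real) \<Rightarrow> ennreal" where
  "LtauV_int V \<tau> u = (\<integral>\<^sup>+x. ennreal (V x * \<bar>u x\<bar> powr \<tau>) \<partial>lborel)"

text \<open>The map (u,g) |-> u from H^1_V is injective (on a.e.-classes).\<close>
definition H1V_injective :: "(real \<Rightarrow> real) \<Rightarrow> bool" where
  "H1V_injective V \<longleftrightarrow> (\<forall>(u, g) \<in> H1V V. (AE x in lborel. u x = 0) \<longrightarrow> (AE x in lborel. g x = 0))"

definition compact_embed_Linf :: "(real \<Rightarrow> real) \<Rightarrow> bool" where
  "compact_embed_Linf V \<longleftrightarrow>
     H1V_injective V \<and>
     (\<exists>C\<ge>0. \<forall>ug \<in> H1V V. AE x in lborel. \<bar>fst ug x\<bar> \<le> C * H1V_norm V ug) \<and>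
     (\<forall>s::nat \<Rightarrow> (real \<Rightarrow> real) \<times> (real \<Rightarrow> real). \<forall>B.
        (\<forall>n. s n \<in> H1V V \<and> H1V_norm V (s n) \<le> B) \<longrightarrow>
        (\<exists>(r::nat \<Rightarrow> nat) w. strict_mono r \<and> w \<in> borel_measurable lborel \<and>
           (\<exists>M. AE x in lborel. \<bar>w x\<bar> \<le> M) \<and>
           (\<forall>\<epsilon>::real>0. \<exists>N. \<forall>k\<ge>N. AE x in lborel. \<bar>fst (s (r k)) x - w x\<bar> \<le> \<epsilon>)))"

definition compact_embed_LtauV :: "(real \<Rightarrow> real) \<Rightarrow> real \<Rightarrow> bool" where
  "compact_embed_LtauV V \<tau> \<longleftrightarrow>
     H1V_injective V \<and>
     (\<exists>C\<ge>0. \<forall>ug \<in> H1V V. LtauV_int V \<tau> (fst ug) \<le> ennreal ((C * H1V_norm V ug) powr \<tau>)) \<and>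
     (\<forall>s::nat \<Rightarrow> (real \<Rightarrow> real) \<times> (real \<Rightarrow> real). \<forall>B.
        (\<forall>n. s n \<in> H1V V \<and> H1V_norm V (s n) \<le> B) \<longrightarrow>
        (\<exists>(r::nat \<Rightarrow> nat) w. strict_mono r \<and> w \<in> borel_measurable lborel \<and>
           LtauV_int V \<tau> w < \<infinity> \<and>
           (\<lambda>k. LtauV_int V \<tau> (\<lambda>x. fst (s (r k)) x - w x)) \<longlonglongrightarrow> 0))"

end

(*
  For a C^1 function f of compact support let E(f) be the integral of f'^2 + V f^2.
  Integrating (f^2)' = 2 f f' from x outwards and using 2 sqrt M |f f'| <= f'^2 + M f^2 gives
  sqrt M f(x)^2 <= E(f) whenever V >= M beyond |x|; integrating f' gives
  s |f y - f x| <= s^2 (y - x) + E(f) for every s > 0.  Both bounds pass to the uniform limit of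
  the test-function approximants of an element of H^1_V, so every element has a continuous
  representative that is bounded, has a modulus of continuity depending only on its norm and,
  V being coercive, is uniformly small at infinity.  By Arzela-Ascoli on each [-i, i] and a
  diagonal argument, a bounded sequence therefore has a subsequence converging uniformly on the
  whole line, which is the compact embedding into L^infinity.  The embedding into L^tau_V
  follows from V |u|^tau <= ||u||_infinity^(tau - 2) V u^2.
*)

theory Submission
  imports Defs "HOL-Complex_Analysis.Great_Picard"
begin

section \<open>C^1 functions of compact support\<close>

definition C1_vanishing_outside :: "real \<Rightarrow> (real \<Rightarrow> real) \<Rightarrow> bool" where
  "C1_vanishing_outside L f \<longleftrightarrow>
     (\<forall>x. (f has_real_derivative deriv f x) (at x)) \<and> continuous_on UNIV (deriv f) \<and>
     (\<forall>x. L < \<bar>x\<bar> \<longrightarrow> f x = 0)"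

lemma deriv_eq_0_outside:
  fixes f :: "real \<Rightarrow> real"
  assumes "\<And>x. L < \<bar>x\<bar> \<Longrightarrow> f x = 0" and "L < \<bar>x\<bar>"
  shows "deriv f x = 0"
proof -
  have "open {x::real. L < \<bar>x\<bar>}"
    by (intro open_Collect_less continuous_intros)
  then have "(f has_real_derivative 0) (at x)"
    by (rule has_field_derivative_transform_within_open[OF DERIV_const])
       (use assms in auto)
  then show ?thesis
    by (rule DERIV_imp_deriv)
qed

context
  fixes L :: real and f :: "real \<Rightarrow> real"
  assumes f: "C1_vanishing_outside L f"
begin

lemma C1_vanishing_outside_has_derivative: "(f has_real_derivative deriv f x) (at x)"
  using f unfolding C1_vanishing_outside_def by blast

lemma C1_vanishing_outside_continuous: "continuous_on UNIV f"
  by (meson C1_vanishing_outside_has_derivative DERIV_isCont continuous_at_imp_continuous_on)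

lemma C1_vanishing_outside_continuous_deriv: "continuous_on UNIV (deriv f)"
  using f unfolding C1_vanishing_outside_def by blast

lemma C1_vanishing_outside_eq_0: "L < \<bar>x\<bar> \<Longrightarrow> f x = 0"
  using f unfolding C1_vanishing_outside_def by blast

lemma C1_vanishing_outside_deriv_eq_0: "L < \<bar>x\<bar> \<Longrightarrow> deriv f x = 0"
  by (rule deriv_eq_0_outside) (use C1_vanishing_outside_eq_0 in auto)

lemma C1_vanishing_outside_measurable:
  "f \<in> borel_measurable lborel" "deriv f \<in> borel_measurable lborel"
  using C1_vanishing_outside_continuous C1_vanishing_outside_continuous_deriv
  by (auto intro: borel_measurable_continuous_onI)

lemma integral_deriv_C1_vanishing_outside:
  assumes "a \<le> b"
  shows "integral {a..b} (deriv f) = f b - f a"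
  using C1_vanishing_outside_has_derivative assms
  by (intro integral_unique fundamental_theorem_of_calculus)
     (auto simp: has_real_derivative_iff_has_vector_derivative[symmetric] intro: has_field_derivative_at_within)

lemma integral_deriv_sq_C1_vanishing_outside:
  assumes "a \<le> b"
  shows "integral {a..b} (\<lambda>t. 2 * f t * deriv f t) = (f b)\<^sup>2 - (f a)\<^sup>2"
proof -
  have "((\<lambda>t. (f t)\<^sup>2) has_real_derivative 2 * f t * deriv f t) (at t)" for t
    using C1_vanishing_outside_has_derivative by (auto intro!: derivative_eq_intros)
  then show ?thesis
    using assms by (intro integral_unique fundamental_theorem_of_calculus)
      (auto simp: has_real_derivative_iff_has_vector_derivative[symmetric] intro: has_field_derivative_at_within)
qed

lemma C1_vanishing_outside_outward_interval:
  obtains c d where "c \<le> d" "\<And>t. t \<in> {c..d} \<Longrightarrow> \<bar>x\<bar> \<le> \<bar>t\<bar>"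
    "(f x)\<^sup>2 = \<bar>(f d)\<^sup>2 - (f c)\<^sup>2\<bar>"
proof (cases "0 \<le> x")
  case True
  have "f (max x (\<bar>L\<bar> + 1)) = 0"
    using C1_vanishing_outside_eq_0[of "\<bar>L\<bar> + 1"] C1_vanishing_outside_eq_0[of x] by (simp add: max_def)
  then show thesis
    using True by (intro that[of x "max x (\<bar>L\<bar> + 1)"]) auto
next
  case False
  have "f (min x (- \<bar>L\<bar> - 1)) = 0"
    using C1_vanishing_outside_eq_0[of "- \<bar>L\<bar> - 1"] C1_vanishing_outside_eq_0[of x] by (simp add: min_def)
  then show thesis
    using False by (intro that[of "min x (- \<bar>L\<bar> - 1)" x]) auto
qed

end

lemma C1_vanishing_outside_diff:
  assumes f: "C1_vanishing_outside L f" and h: "C1_vanishing_outside L h"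
  shows "C1_vanishing_outside L (\<lambda>x. f x - h x)"
    and "deriv (\<lambda>x. f x - h x) = (\<lambda>x. deriv f x - deriv h x)"
proof -
  have D: "((\<lambda>x. f x - h x) has_real_derivative deriv f x - deriv h x) (at x)" for x
    using f h by (auto intro!: derivative_eq_intros C1_vanishing_outside_has_derivative)
  then show deriv_diff: "deriv (\<lambda>x. f x - h x) = (\<lambda>x. deriv f x - deriv h x)"
    by (auto intro!: DERIV_imp_deriv)
  show "C1_vanishing_outside L (\<lambda>x. f x - h x)"
    using f h D unfolding C1_vanishing_outside_def deriv_diff by (auto intro!: continuous_intros)
qed

lemma C1_vanishing_outside_mono:
  "C1_vanishing_outside L f \<Longrightarrow> L \<le> L' \<Longrightarrow> C1_vanishing_outside L' f"
  unfolding C1_vanishing_outside_def by auto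

lemma test_fun_C1_vanishing_outside:
  assumes "test_fun \<phi>"
  obtains L where "C1_vanishing_outside L \<phi>" "C1_vanishing_outside L (deriv \<phi>)"
proof -
  have diff: "((deriv ^^ k) \<phi>) differentiable (at x)" for k x
    using assms unfolding test_fun_def by blast
  have d0: "\<phi> differentiable (at x)" for x using diff[of 0] by simp
  have d1: "deriv \<phi> differentiable (at x)" for x using diff[of 1] by simp
  have d2: "deriv (deriv \<phi>) differentiable (at x)" for x using diff[of 2] by (simp add: numeral_2_eq_2)
  have "bounded {x. \<phi> x \<noteq> 0}"
    using assms unfolding test_fun_def by (meson bounded_subset closure_subset compact_imp_bounded)
  then obtain L where L: "\<And>x. \<phi> x \<noteq> 0 \<Longrightarrow> \<bar>x\<bar> \<le> L"
    unfolding bounded_iff by auto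
  have z0: "L < \<bar>x\<bar> \<Longrightarrow> \<phi> x = 0" for x using L by force
  have z1: "L < \<bar>x\<bar> \<Longrightarrow> deriv \<phi> x = 0" for x using deriv_eq_0_outside z0 by blast
  have "continuous_on UNIV (deriv \<phi>)" "continuous_on UNIV (deriv (deriv \<phi>))"
    using d1 d2 by (auto intro!: continuous_at_imp_continuous_on differentiable_imp_continuous_within)
  then show thesis
    using d0 d1 z0 z1
    by (intro that[of L]) (auto simp: C1_vanishing_outside_def DERIV_deriv_iff_real_differentiable)
qed

lemma abs_integral_mult_deriv_le:
  assumes \<psi>: "C1_vanishing_outside L \<psi>" and h: "C1_vanishing_outside L' h"
    and ab: "a \<le> b" "\<psi> a = 0" "\<psi> b = 0" and small: "\<And>x. x \<in> {a..b} \<Longrightarrow> \<bar>h x\<bar> \<le> \<epsilon>"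
  shows "\<bar>integral {a..b} (\<lambda>x. \<psi> x * deriv h x)\<bar> \<le> \<epsilon> * integral {a..b} (\<lambda>x. \<bar>deriv \<psi> x\<bar>)"
proof -
  note cont = C1_vanishing_outside_continuous[OF \<psi>] C1_vanishing_outside_continuous_deriv[OF \<psi>]
    C1_vanishing_outside_continuous[OF h] C1_vanishing_outside_continuous_deriv[OF h]
  have int: "g integrable_on {a..b}" if "continuous_on UNIV g" for g :: "real \<Rightarrow> real"
    by (rule integrable_continuous_interval) (rule continuous_on_subset[OF that], simp)
  have "((\<lambda>x. \<psi> x * h x) has_real_derivative deriv \<psi> x * h x + \<psi> x * deriv h x) (at x)" for x
    using DERIV_mult[OF C1_vanishing_outside_has_derivative[OF \<psi>] C1_vanishing_outside_has_derivative[OF h]]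
    by (simp add: algebra_simps)
  then have "((\<lambda>x. deriv \<psi> x * h x + \<psi> x * deriv h x) has_integral \<psi> b * h b - \<psi> a * h a) {a..b}"
    using ab(1) by (intro fundamental_theorem_of_calculus)
      (auto simp: has_real_derivative_iff_has_vector_derivative[symmetric] intro: has_field_derivative_at_within)
  then have "integral {a..b} (\<lambda>x. deriv \<psi> x * h x + \<psi> x * deriv h x) = 0"
    using ab(2,3) by (simp add: integral_unique)
  moreover have "integral {a..b} (\<lambda>x. deriv \<psi> x * h x + \<psi> x * deriv h x) =
      integral {a..b} (\<lambda>x. deriv \<psi> x * h x) + integral {a..b} (\<lambda>x. \<psi> x * deriv h x)"
    by (intro integral_add int continuous_intros cont)
  ultimately have "\<bar>integral {a..b} (\<lambda>x. \<psi> x * deriv h x)\<bar> = \<bar>integral {a..b} (\<lambda>x. h x * deriv \<psi> x)\<bar>"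
    by (simp add: mult.commute)
  also have "\<dots> \<le> integral {a..b} (\<lambda>x. \<epsilon> * \<bar>deriv \<psi> x\<bar>)"
    using small by (intro integral_norm_bound_integral[where 'a=real, unfolded real_norm_def] int
        continuous_intros cont) (auto simp: abs_mult mult_right_mono)
  finally show ?thesis
    by simp
qed

section \<open>Integrals, limits and Arzela-Ascoli\<close>

lemma nn_integral_eq_integral_vanishing_outside:
  fixes h :: "real \<Rightarrow> real"
  assumes "continuous_on {a..b} h" "\<And>x. 0 \<le> h x" "\<And>x. x \<notin> {a..b} \<Longrightarrow> h x = 0"
  shows "(\<integral>\<^sup>+x. ennreal (h x) \<partial>lborel) = ennreal (integral {a..b} h)"
proof -
  have "(\<lambda>x. ennreal (h x) * indicator {a..b} x) = (\<lambda>x. ennreal (h x))"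
    using assms by (auto simp: indicator_def)
  moreover have "(\<integral>\<^sup>+x. ennreal (h x) * indicator {a..b} x \<partial>lborel) = ennreal (integral {a..b} h)"
    using assms by (intro nn_integral_has_integral_lebesgue' integrable_integral integrable_continuous_interval)
  ultimately show ?thesis
    by simp
qed

lemma nn_integral_le_2_add:
  fixes X A B :: "'a \<Rightarrow> real"
  assumes [measurable]: "A \<in> borel_measurable M" "B \<in> borel_measurable M"
    and "\<And>x. 0 \<le> A x" "\<And>x. 0 \<le> B x" "\<And>x. X x \<le> 2 * A x + 2 * B x"
  shows "(\<integral>\<^sup>+x. ennreal (X x) \<partial>M) \<le> 2 * (\<integral>\<^sup>+x. ennreal (A x) \<partial>M) + 2 * (\<integral>\<^sup>+x. ennreal (B x) \<partial>M)"
proof -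
  have "(\<integral>\<^sup>+x. ennreal (X x) \<partial>M) \<le> (\<integral>\<^sup>+x. 2 * ennreal (A x) + 2 * ennreal (B x) \<partial>M)"
  proof (rule nn_integral_mono)
    fix x
    have "ennreal (X x) \<le> ennreal (2 * A x + 2 * B x)"
      using assms(5) by (rule ennreal_leI)
    also have "\<dots> = 2 * ennreal (A x) + 2 * ennreal (B x)"
      using assms(3,4)[of x] by (simp add: ennreal_plus ennreal_mult)
    finally show "ennreal (X x) \<le> 2 * ennreal (A x) + 2 * ennreal (B x)" .
  qed
  also have "\<dots> = 2 * (\<integral>\<^sup>+x. ennreal (A x) \<partial>M) + 2 * (\<integral>\<^sup>+x. ennreal (B x) \<partial>M)"
    by (simp add: nn_integral_add nn_integral_cmult)
  finally show ?thesis .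
qed

lemma nn_integral_pointwise_limit_le_liminf:
  fixes f :: "nat \<Rightarrow> 'a \<Rightarrow> real"
  assumes [measurable]: "\<And>n. f n \<in> borel_measurable M"
    and lim: "\<And>x. (\<lambda>n. f n x) \<longlonglongrightarrow> h x"
  shows "(\<integral>\<^sup>+x. ennreal (h x) \<partial>M) \<le> liminf (\<lambda>n. \<integral>\<^sup>+x. ennreal (f n x) \<partial>M)"
proof -
  have "(\<integral>\<^sup>+x. ennreal (h x) \<partial>M) = (\<integral>\<^sup>+x. liminf (\<lambda>n. ennreal (f n x)) \<partial>M)"
    using lim by (intro nn_integral_cong) (simp add: lim_imp_Liminf[symmetric] tendsto_ennrealI)
  also have "\<dots> \<le> liminf (\<lambda>n. \<integral>\<^sup>+x. ennreal (f n x) \<partial>M)"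
    by (intro nn_integral_liminf) measurable
  finally show ?thesis .
qed

lemma tendsto_0_ennrealI:
  fixes X :: "nat \<Rightarrow> ennreal"
  assumes "\<And>\<delta>. 0 < \<delta> \<Longrightarrow> eventually (\<lambda>k. X k \<le> ennreal \<delta>) sequentially"
  shows "X \<longlonglongrightarrow> 0"
proof (rule order_tendstoI)
  fix a :: ennreal
  assume "0 < a"
  then obtain \<delta> where "0 < \<delta>" "ennreal \<delta> < a"
  proof (cases a rule: ennreal_cases)
    case (real r)
    then show ?thesis using \<open>0 < a\<close> by (intro that[of "r / 2"]) (auto simp: ennreal_less_iff)
  qed (use that[of 1] in auto)
  then show "eventually (\<lambda>k. X k < a) sequentially"
    using assms[of \<delta>] by (auto elim: eventually_mono)
qed simp

lemma abs_powr_le_sq_mult_powr: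
  fixes a b \<tau> :: real
  assumes "2 \<le> \<tau>" and "\<bar>a\<bar> \<le> b"
  shows "\<bar>a\<bar> powr \<tau> \<le> a\<^sup>2 * b powr (\<tau> - 2)"
proof (cases "a = 0")
  case False
  then have "\<bar>a\<bar> powr \<tau> = a\<^sup>2 * \<bar>a\<bar> powr (\<tau> - 2)"
    using powr_add[of "\<bar>a\<bar>" 2 "\<tau> - 2"] by (simp add: powr_numeral)
  also have "\<dots> \<le> a\<^sup>2 * b powr (\<tau> - 2)"
    using assms by (intro mult_left_mono powr_mono2) auto
  finally show ?thesis .
qed (use assms in simp)

lemma powr_mult_sq_le_max_powr:
  fixes K n \<tau> :: real
  assumes "0 \<le> K" "0 \<le> n" "2 \<le> \<tau>"
  shows "(K * n) powr (\<tau> - 2) * n\<^sup>2 \<le> (max K 1 * n) powr \<tau>"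
proof (cases "n = 0")
  case False
  then have Cn: "0 < max K 1 * n" using assms by simp
  have "(K * n) powr (\<tau> - 2) * n\<^sup>2 \<le> (max K 1 * n) powr (\<tau> - 2) * (max K 1 * n)\<^sup>2"
    using assms by (intro mult_mono powr_mono2 mult_right_mono power_mono) (auto simp: mult_le_cancel_right1)
  also have "\<dots> = (max K 1 * n) powr \<tau>"
    using Cn powr_add[of "max K 1 * n" "\<tau> - 2" 2] by (simp add: powr_numeral)
  finally show ?thesis .
qed (use assms in simp)

lemma uniformly_convergent_subseq_on_intervals:
  fixes F :: "nat \<Rightarrow> real \<Rightarrow> real"
  assumes bounded: "\<And>n x. \<bar>F n x\<bar> \<le> M"
    and equicont: "\<And>e. 0 < e \<Longrightarrow> \<exists>d>0. \<forall>n x y. \<bar>x - y\<bar> < d \<longrightarrow> \<bar>F n x - F n y\<bar> < e"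
  obtains k where "strict_mono k" "\<And>i. \<exists>g. uniform_limit {- real i..real i} (F \<circ> k) g sequentially"
proof -
  define P where "P i r \<longleftrightarrow> (\<exists>g. uniform_limit {- real i..real i} (F \<circ> r) g sequentially)"
    for i :: nat and r :: "nat \<Rightarrow> nat"
  obtain k where "strict_mono k" "\<And>i. P i (id \<circ> k)"
  proof (rule subsequence_diagonalization_lemma[of P id])
    fix i :: nat and r :: "nat \<Rightarrow> nat"
    obtain g k where "strict_mono (k :: nat \<Rightarrow> nat)"
      "\<And>e. 0 < e \<Longrightarrow> \<exists>N. \<forall>n x. n \<ge> N \<and> x \<in> {- real i..real i} \<longrightarrow> norm (F (r (k n)) x - g x) < e"
    proof (rule Arzela_Ascoli[of "{- real i..real i}" "\<lambda>n. F (r n)" M])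
      fix x e assume "0 < (e::real)"
      then show "\<exists>d>0. \<forall>n y. y \<in> {- real i..real i} \<and> norm (x - y) < d \<longrightarrow> norm (F (r n) x - F (r n) y) < e"
        using equicont by (fastforce simp: real_norm_def)
    qed (use bounded in auto)
    then show "\<exists>k. strict_mono k \<and> P i (r \<circ> k)"
      unfolding P_def uniform_limit_sequentially_iff dist_real_def real_norm_def by (metis comp_apply)
  next
    fix i :: nat and r k1 k2 :: "nat \<Rightarrow> nat" and N
    assume "P i (r \<circ> k1)" and later: "\<And>j. N \<le> j \<Longrightarrow> \<exists>j'. j \<le> j' \<and> k2 j = k1 j'"
    then obtain g where g: "uniform_limit {- real i..real i} (F \<circ> r \<circ> k1) g sequentially"
      unfolding P_def by (auto simp: comp_assoc)
    have "uniform_limit {- real i..real i} (F \<circ> r \<circ> k2) g sequentially"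
      unfolding uniform_limit_sequentially_iff
    proof (intro allI impI)
      fix e :: real assume "0 < e"
      then obtain N0 where N0: "\<And>n x. N0 \<le> n \<Longrightarrow> x \<in> {- real i..real i} \<Longrightarrow> dist (F (r (k1 n)) x) (g x) < e"
        using g unfolding uniform_limit_sequentially_iff by fastforce
      have "dist (F (r (k2 n)) x) (g x) < e" if "max N N0 \<le> n" "x \<in> {- real i..real i}" for n x
        using later[of n] N0 that by fastforce
      then show "\<exists>N. \<forall>n\<ge>N. \<forall>x\<in>{- real i..real i}. dist ((F \<circ> r \<circ> k2) n x) (g x) < e"
        by (metis comp_apply)
    qed
    then show "P i (r \<circ> k2)"
      unfolding P_def by (auto simp: comp_assoc)
  qed (blast intro: that)
  then show thesis
    using that unfolding P_def by auto
qed

lemma uniformly_convergent_subseq_vanishing_at_infinity: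
  fixes F :: "nat \<Rightarrow> real \<Rightarrow> real"
  assumes bounded: "\<And>n x. \<bar>F n x\<bar> \<le> M"
    and equicont: "\<And>e. 0 < e \<Longrightarrow> \<exists>d>0. \<forall>n x y. \<bar>x - y\<bar> < d \<longrightarrow> \<bar>F n x - F n y\<bar> < e"
    and tail: "\<And>\<epsilon>. 0 < \<epsilon> \<Longrightarrow> \<exists>R. \<forall>n x. R \<le> \<bar>x\<bar> \<longrightarrow> \<bar>F n x\<bar> \<le> \<epsilon>"
  obtains k w where "strict_mono k" "uniform_limit UNIV (F \<circ> k) w sequentially"
proof -
  obtain k where k: "strict_mono k"
    and local: "\<And>i. \<exists>g. uniform_limit {- real i..real i} (F \<circ> k) g sequentially"
    using uniformly_convergent_subseq_on_intervals[OF bounded equicont] by blast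
  have "uniformly_Cauchy_on UNIV (F \<circ> k)"
  proof (rule uniformly_Cauchy_onI)
    fix e :: real assume e: "0 < e"
    obtain R where R: "\<And>n x. R \<le> \<bar>x\<bar> \<Longrightarrow> \<bar>F n x\<bar> \<le> e / 3"
      using tail[of "e / 3"] e by auto
    define i where "i = nat \<lceil>R\<rceil>"
    obtain g where "uniform_limit {- real i..real i} (F \<circ> k) g sequentially"
      using local by blast
    then obtain N where N: "\<And>n x. N \<le> n \<Longrightarrow> x \<in> {- real i..real i} \<Longrightarrow> \<bar>F (k n) x - g x\<bar> < e / 3"
      using e unfolding uniform_limit_sequentially_iff dist_real_def
      by (metis comp_apply zero_less_divide_iff zero_less_numeral)
    have "dist (F (k m) x) (F (k n) x) < e" if "N \<le> m" "N \<le> n" for m n x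
    proof (cases "x \<in> {- real i..real i}")
      case True
      then show ?thesis using N[OF that(1) True] N[OF that(2) True] unfolding dist_real_def by linarith
    next
      case False
      then have "R \<le> \<bar>x\<bar>" unfolding i_def by auto linarith+
      then show ?thesis using R[of x "k m"] R[of x "k n"] e unfolding dist_real_def by linarith
    qed
    then show "\<exists>N. \<forall>x\<in>UNIV. \<forall>m\<ge>N. \<forall>n\<ge>N. dist ((F \<circ> k) m x) ((F \<circ> k) n x) < e"
      by auto
  qed
  then show thesis
    using that k Cauchy_uniformly_convergent unfolding uniformly_convergent_on_def by blast
qed

section \<open>Energy estimates\<close>

locale potential =
  fixes V :: "real \<Rightarrow> real" and v0 :: real
  assumes continuous_V: "continuous_on UNIV V"
    and v0_le_V: "\<And>x. v0 \<le> V x"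
    and v0_pos: "0 < v0"
begin

lemma V_pos: "0 < V x"
  using v0_le_V[of x] v0_pos by linarith

lemma V_measurable [measurable]: "V \<in> borel_measurable lborel"
  using continuous_V by (simp add: borel_measurable_continuous_onI)

definition energy_density :: "(real \<Rightarrow> real) \<Rightarrow> (real \<Rightarrow> real) \<Rightarrow> real \<Rightarrow> real" where
  "energy_density u g x = (g x)\<^sup>2 + V x * (u x)\<^sup>2"

definition energy :: "(real \<Rightarrow> real) \<Rightarrow> (real \<Rightarrow> real) \<Rightarrow> ennreal" where
  "energy u g = (\<integral>\<^sup>+x. ennreal (energy_density u g x) \<partial>lborel)"

lemma energy_density_nonneg: "0 \<le> energy_density u g x"
  unfolding energy_density_def using V_pos[of x] by simp

lemma energy_eq_H1V_norm:
  assumes "(u, g) \<in> H1V V"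
  shows "energy u g = ennreal ((H1V_norm V (u, g))\<^sup>2)"
proof -
  have "energy u g < \<infinity>"
    using assms unfolding H1V_def energy_def energy_density_def by auto
  then show ?thesis
    unfolding H1V_norm_def energy_def energy_density_def by simp
qed

lemma energy_add_le:
  assumes [measurable]: "a \<in> borel_measurable lborel" "b \<in> borel_measurable lborel"
    "c \<in> borel_measurable lborel" "d \<in> borel_measurable lborel"
  shows "energy (\<lambda>x. a x + b x) (\<lambda>x. c x + d x) \<le> 2 * energy a c + 2 * energy b d"
  unfolding energy_def
proof (rule nn_integral_le_2_add)
  show "energy_density a c \<in> borel_measurable lborel" "energy_density b d \<in> borel_measurable lborel"
    unfolding energy_density_def by measurable
  fix x
  have sq: "(p + q)\<^sup>2 \<le> 2 * p\<^sup>2 + 2 * q\<^sup>2" for p q :: real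
    using sum_squares_ge_zero[of "p - q" 0] by (simp add: power2_eq_square algebra_simps)
  have "V x * (a x + b x)\<^sup>2 \<le> V x * (2 * (a x)\<^sup>2 + 2 * (b x)\<^sup>2)"
    using V_pos[of x] by (intro mult_left_mono sq) auto
  then show "energy_density (\<lambda>x. a x + b x) (\<lambda>x. c x + d x) x \<le>
      2 * energy_density a c x + 2 * energy_density b d x"
    using sq[of "c x" "d x"] unfolding energy_density_def by (simp add: algebra_simps)
qed (rule energy_density_nonneg)+

(* The pointwise consequences of an energy bound b: smallness where V is large and, optimising
   over s, the modulus of continuity |w y - w x| <= 2 sqrt (b (y - x)). *)
definition sobolev_bounds :: "real \<Rightarrow> (real \<Rightarrow> real) \<Rightarrow> bool" where
  "sobolev_bounds b w \<longleftrightarrow>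
     (\<forall>M x. 0 < M \<longrightarrow> (\<forall>t. \<bar>x\<bar> \<le> \<bar>t\<bar> \<longrightarrow> M \<le> V t) \<longrightarrow> sqrt M * (w x)\<^sup>2 \<le> b) \<and>
     (\<forall>s x y. 0 < s \<longrightarrow> x \<le> y \<longrightarrow> s * \<bar>w y - w x\<bar> \<le> s\<^sup>2 * (y - x) + b)"

lemma sobolev_bounds_mono: "sobolev_bounds b w \<Longrightarrow> b \<le> c \<Longrightarrow> sobolev_bounds c w"
  unfolding sobolev_bounds_def by (meson add_left_mono order_trans)

lemma sobolev_bounds_limit:
  assumes lim: "\<And>x. (\<lambda>n. f n x) \<longlonglongrightarrow> w x" and b: "b \<longlonglongrightarrow> c"
    and bounds: "eventually (\<lambda>n. sobolev_bounds (b n) (f n)) sequentially"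
  shows "sobolev_bounds c w"
  unfolding sobolev_bounds_def
proof (intro conjI allI impI)
  fix M x assume "0 < M" "\<forall>t. \<bar>x\<bar> \<le> \<bar>t\<bar> \<longrightarrow> M \<le> V t"
  with bounds have "eventually (\<lambda>n. sqrt M * (f n x)\<^sup>2 \<le> b n) sequentially"
    unfolding sobolev_bounds_def by (auto elim: eventually_mono)
  then show "sqrt M * (w x)\<^sup>2 \<le> c"
    by (intro tendsto_le[OF _ b]) (auto intro!: tendsto_intros lim)
next
  fix s x y :: real assume "0 < s" "x \<le> y"
  with bounds have "eventually (\<lambda>n. s * \<bar>f n y - f n x\<bar> \<le> s\<^sup>2 * (y - x) + b n) sequentially"
    unfolding sobolev_bounds_def by (auto elim: eventually_mono)
  then show "s * \<bar>w y - w x\<bar> \<le> s\<^sup>2 * (y - x) + c"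
    by (intro tendsto_le[OF _ tendsto_add[OF tendsto_const b]]) (auto intro!: tendsto_intros lim)
qed

lemma sobolev_bounds_abs_le:
  assumes "sobolev_bounds b w"
  shows "\<bar>w x\<bar> \<le> sqrt (b / sqrt v0)"
proof -
  have "sqrt v0 * (w x)\<^sup>2 \<le> b"
    using assms v0_pos v0_le_V unfolding sobolev_bounds_def by blast
  then have "(w x)\<^sup>2 \<le> b / sqrt v0"
    using v0_pos by (simp add: field_simps)
  then show ?thesis
    by (simp add: real_le_rsqrt)
qed

lemma sobolev_bounds_equicontinuous:
  assumes "0 < \<epsilon>" "0 \<le> b"
  obtains d where "0 < d" "\<And>w x y. sobolev_bounds b w \<Longrightarrow> \<bar>x - y\<bar> < d \<Longrightarrow> \<bar>w x - w y\<bar> < \<epsilon>"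
proof -
  define s where "s = 2 * b / \<epsilon> + 1"
  have "s * \<epsilon> / 2 = b + \<epsilon> / 2"
    unfolding s_def using assms by (simp add: field_simps)
  then have s: "0 < s" "b < s * \<epsilon> / 2"
    unfolding s_def using assms by (auto intro: add_nonneg_pos)
  have ordered: "\<bar>w y - w x\<bar> < \<epsilon>"
    if w: "sobolev_bounds b w" and xy: "x \<le> y" "y - x < \<epsilon> / (2 * s)" for w x y
  proof -
    have "s * \<bar>w y - w x\<bar> \<le> s\<^sup>2 * (y - x) + b"
      using w s xy unfolding sobolev_bounds_def by blast
    also have "\<dots> \<le> s\<^sup>2 * (\<epsilon> / (2 * s)) + b"
      using xy by (intro add_right_mono mult_left_mono) auto
    also have "s\<^sup>2 * (\<epsilon> / (2 * s)) = s * \<epsilon> / 2"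
      using s by (simp add: power2_eq_square)
    finally have "s * \<bar>w y - w x\<bar> < s * \<epsilon>"
      using s by linarith
    then show ?thesis
      using s by simp
  qed
  have "\<bar>w x - w y\<bar> < \<epsilon>" if "sobolev_bounds b w" "\<bar>x - y\<bar> < \<epsilon> / (2 * s)" for w x y
  proof (cases "x \<le> y")
    case True
    then show ?thesis
      using ordered[OF that(1) True] that(2) by (simp add: abs_minus_commute)
  next
    case False
    then show ?thesis
      using ordered[OF that(1), of y x] that(2) by simp
  qed
  then show thesis
    using assms s by (intro that[of "\<epsilon> / (2 * s)"]) auto
qed

context
  fixes L :: real and f :: "real \<Rightarrow> real"
  assumes f: "C1_vanishing_outside L f"
begin

lemma continuous_energy_density_C1: "continuous_on UNIV (energy_density f (deriv f))"
  unfolding energy_density_def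
  using f by (intro continuous_intros continuous_V C1_vanishing_outside_continuous
      C1_vanishing_outside_continuous_deriv)

lemma integrable_energy_density_C1: "energy_density f (deriv f) integrable_on {a..b}"
  by (rule integrable_continuous_interval)
     (rule continuous_on_subset[OF continuous_energy_density_C1], simp)

lemma energy_C1_eq_integral:
  assumes "a \<le> - \<bar>L\<bar>" "\<bar>L\<bar> \<le> b"
  shows "energy f (deriv f) = ennreal (integral {a..b} (energy_density f (deriv f)))"
  unfolding energy_def
proof (rule nn_integral_eq_integral_vanishing_outside)
  show "continuous_on {a..b} (energy_density f (deriv f))"
    using continuous_energy_density_C1 by (rule continuous_on_subset) simp
  show "energy_density f (deriv f) x = 0" if "x \<notin> {a..b}" for x
    using that assms f C1_vanishing_outside_eq_0 C1_vanishing_outside_deriv_eq_0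
    unfolding energy_density_def by fastforce
qed (rule energy_density_nonneg)

lemma integral_le_energy_C1:
  assumes "x \<le> y"
  shows "integral {x..y} (energy_density f (deriv f)) \<le> enn2real (energy f (deriv f))"
proof -
  define a where "a = min x (- \<bar>L\<bar>)"
  define b where "b = max y \<bar>L\<bar>"
  have "integral {x..y} (energy_density f (deriv f)) \<le> integral {a..b} (energy_density f (deriv f))"
    unfolding a_def b_def
    by (intro integral_subset_le integrable_energy_density_C1 ballI energy_density_nonneg) auto
  also have "\<dots> = enn2real (energy f (deriv f))"
  proof -
    have "0 \<le> integral {a..b} (energy_density f (deriv f))"
      by (intro integral_nonneg integrable_energy_density_C1 energy_density_nonneg)
    then show ?thesis
      by (subst energy_C1_eq_integral[of a b]) (auto simp: a_def b_def)
  qed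
  finally show ?thesis .
qed

lemma sqrt_mult_sq_le_energy_C1:
  assumes M: "0 < M" and MV: "\<And>t. \<bar>x\<bar> \<le> \<bar>t\<bar> \<Longrightarrow> M \<le> V t"
  shows "sqrt M * (f x)\<^sup>2 \<le> enn2real (energy f (deriv f))"
proof -
  obtain c d where cd: "c \<le> d" "\<And>t. t \<in> {c..d} \<Longrightarrow> \<bar>x\<bar> \<le> \<bar>t\<bar>"
    and fx: "(f x)\<^sup>2 = \<bar>(f d)\<^sup>2 - (f c)\<^sup>2\<bar>"
    using C1_vanishing_outside_outward_interval[OF f, where x = x] by blast
  have cont: "continuous_on {c..d} g" if "continuous_on UNIV g" for g :: "real \<Rightarrow> real"
    using that by (rule continuous_on_subset) simp
  have "sqrt M * (f x)\<^sup>2 = \<bar>integral {c..d} (\<lambda>t. sqrt M * (2 * f t * deriv f t))\<bar>"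
    using fx integral_deriv_sq_C1_vanishing_outside[OF f cd(1)] M by (simp add: abs_mult)
  also have "\<dots> \<le> integral {c..d} (energy_density f (deriv f))"
  proof (rule integral_norm_bound_integral[where 'a=real, unfolded real_norm_def])
    show "(\<lambda>t. sqrt M * (2 * f t * deriv f t)) integrable_on {c..d}"
      using f by (intro integrable_continuous_interval cont continuous_intros
          C1_vanishing_outside_continuous C1_vanishing_outside_continuous_deriv)
    show "energy_density f (deriv f) integrable_on {c..d}"
      by (rule integrable_energy_density_C1)
    fix t assume "t \<in> {c..d}"
    then have "M \<le> V t"
      using cd(2) MV by blast
    have "0 \<le> (sqrt M * \<bar>f t\<bar> - \<bar>deriv f t\<bar>)\<^sup>2"
      by simp
    then have "sqrt M * (2 * \<bar>f t\<bar> * \<bar>deriv f t\<bar>) \<le> M * (f t)\<^sup>2 + (deriv f t)\<^sup>2"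
      using M by (simp add: power2_diff power_mult_distrib algebra_simps)
    also have "\<dots> \<le> energy_density f (deriv f) t"
      unfolding energy_density_def using \<open>M \<le> V t\<close> by (simp add: mult_right_mono)
    finally show "\<bar>sqrt M * (2 * f t * deriv f t)\<bar> \<le> energy_density f (deriv f) t"
      using M by (simp add: abs_mult mult.assoc)
  qed
  also have "\<dots> \<le> enn2real (energy f (deriv f))"
    by (rule integral_le_energy_C1[OF cd(1)])
  finally show ?thesis .
qed

lemma modulus_le_energy_C1:
  assumes s: "0 < s" and xy: "x \<le> y"
  shows "s * \<bar>f y - f x\<bar> \<le> s\<^sup>2 * (y - x) + enn2real (energy f (deriv f))"
proof -
  have cont: "continuous_on {x..y} g" if "continuous_on UNIV g" for g :: "real \<Rightarrow> real"
    using that by (rule continuous_on_subset) simp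
  have "s * \<bar>f y - f x\<bar> = \<bar>integral {x..y} (\<lambda>t. s * deriv f t)\<bar>"
    using integral_deriv_C1_vanishing_outside[OF f xy] s by (simp add: abs_mult)
  also have "\<dots> \<le> integral {x..y} (\<lambda>t. s\<^sup>2 + energy_density f (deriv f) t)"
  proof (rule integral_norm_bound_integral[where 'a=real, unfolded real_norm_def])
    show "(\<lambda>t. s * deriv f t) integrable_on {x..y}"
      using f by (intro integrable_continuous_interval cont continuous_intros
          C1_vanishing_outside_continuous_deriv)
    show "(\<lambda>t. s\<^sup>2 + energy_density f (deriv f) t) integrable_on {x..y}"
      by (intro integrable_add integrable_const_ivl integrable_energy_density_C1)
    fix t
    have "0 \<le> (s - \<bar>deriv f t\<bar>)\<^sup>2"
      by simp
    then have "2 * (s * \<bar>deriv f t\<bar>) \<le> s\<^sup>2 + (deriv f t)\<^sup>2"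
      by (simp add: power2_diff mult.assoc)
    moreover have "0 \<le> s * \<bar>deriv f t\<bar>"
      using s by simp
    ultimately have "\<bar>s * deriv f t\<bar> \<le> s\<^sup>2 + (deriv f t)\<^sup>2"
      by (simp only: abs_mult abs_of_pos[OF s])
    also have "\<dots> \<le> s\<^sup>2 + energy_density f (deriv f) t"
      unfolding energy_density_def using V_pos[of t] by simp
    finally show "\<bar>s * deriv f t\<bar> \<le> s\<^sup>2 + energy_density f (deriv f) t" .
  qed
  also have "\<dots> = s\<^sup>2 * (y - x) + integral {x..y} (energy_density f (deriv f))"
    using xy by (subst integral_add) (auto intro: integrable_energy_density_C1)
  also have "\<dots> \<le> s\<^sup>2 * (y - x) + enn2real (energy f (deriv f))"
    using integral_le_energy_C1[OF xy] by simp
  finally show ?thesis .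
qed

lemma sobolev_bounds_C1: "sobolev_bounds (enn2real (energy f (deriv f))) f"
  unfolding sobolev_bounds_def
  using sqrt_mult_sq_le_energy_C1 modulus_le_energy_C1 by blast

end

end

section \<open>Approximation by test functions\<close>

locale C1_approximation = potential +
  fixes u g :: "real \<Rightarrow> real" and \<phi> :: "nat \<Rightarrow> real \<Rightarrow> real" and e :: "nat \<Rightarrow> real"
  assumes u_measurable [measurable]: "u \<in> borel_measurable lborel"
    and g_measurable [measurable]: "g \<in> borel_measurable lborel"
    and C1_approximants: "\<And>n. \<exists>L. C1_vanishing_outside L (\<phi> n) \<and> C1_vanishing_outside L (deriv (\<phi> n))"
    and approximation_error: "\<And>n. energy (\<lambda>x. \<phi> n x - u x) (\<lambda>x. deriv (\<phi> n) x - g x) = ennreal (e n)"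
    and error_nonneg: "\<And>n. 0 \<le> e n"
    and error_tendsto_0: "e \<longlonglongrightarrow> 0"

lemma (in potential) H1V_C1_approximation:
  assumes "(u, g) \<in> H1V V"
  obtains \<phi> e where "C1_approximation V v0 u g \<phi> e"
proof -
  obtain \<phi> where test: "\<And>n. test_fun (\<phi> n)"
    and lim: "(\<lambda>n. energy (\<lambda>x. \<phi> n x - u x) (\<lambda>x. deriv (\<phi> n) x - g x)) \<longlonglongrightarrow> 0"
    using assms unfolding H1V_def energy_def energy_density_def by (auto simp: power2_commute)
  define E where "E n = energy (\<lambda>x. \<phi> n x - u x) (\<lambda>x. deriv (\<phi> n) x - g x)" for n
  \<comment> \<open>Dropping an initial segment makes all the errors finite.\<close>
  obtain N where N: "\<And>n. N \<le> n \<Longrightarrow> E n < 1"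
    using order_tendstoD(2)[OF lim, of 1] unfolding E_def eventually_sequentially by auto
  have fin: "E (n + N) = ennreal (enn2real (E (n + N)))" for n
  proof -
    have "E (n + N) \<noteq> top"
      using N[of "n + N"] by auto
    then show ?thesis
      by (simp add: ennreal_enn2real_if)
  qed
  have "(\<lambda>n. enn2real (E (n + N))) \<longlonglongrightarrow> 0"
    using lim unfolding E_def[symmetric] by (intro tendsto_enn2real) (auto simp: LIMSEQ_ignore_initial_segment)
  moreover have "\<exists>L. C1_vanishing_outside L (\<phi> (n + N)) \<and> C1_vanishing_outside L (deriv (\<phi> (n + N)))" for n
    using test_fun_C1_vanishing_outside[OF test] by metis
  moreover have "u \<in> borel_measurable lborel" "g \<in> borel_measurable lborel"
    using assms unfolding H1V_def by auto
  ultimately have "C1_approximation V v0 u g (\<lambda>n. \<phi> (n + N)) (\<lambda>n. enn2real (E (n + N)))"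
    using fin unfolding E_def by unfold_locales auto
  then show thesis
    by (rule that)
qed

context C1_approximation
begin

lemma C1_approximant:
  obtains L where "C1_vanishing_outside L (\<phi> n)" "C1_vanishing_outside L (deriv (\<phi> n))"
  using C1_approximants by blast

lemma approximant_measurable [measurable]:
  "\<phi> n \<in> borel_measurable lborel" "deriv (\<phi> n) \<in> borel_measurable lborel"
  by (metis C1_approximant C1_vanishing_outside_measurable)+

lemma continuous_approximant: "continuous_on UNIV (\<phi> n)"
  by (metis C1_approximant C1_vanishing_outside_continuous)

lemma approximation_error_commute:
  "energy (\<lambda>x. u x - \<phi> n x) (\<lambda>x. g x - deriv (\<phi> n) x) = ennreal (e n)"
  using approximation_error unfolding energy_def energy_density_def by (simp add: power2_commute)

lemma energy_approximant_diff_le: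
  "enn2real (energy (\<lambda>x. \<phi> m x - \<phi> n x) (\<lambda>x. deriv (\<phi> m) x - deriv (\<phi> n) x)) \<le> 2 * e m + 2 * e n"
proof -
  have "energy (\<lambda>x. \<phi> m x - \<phi> n x) (\<lambda>x. deriv (\<phi> m) x - deriv (\<phi> n) x) =
      energy (\<lambda>x. (\<phi> m x - u x) + (u x - \<phi> n x)) (\<lambda>x. (deriv (\<phi> m) x - g x) + (g x - deriv (\<phi> n) x))"
    by simp
  also have "\<dots> \<le> 2 * energy (\<lambda>x. \<phi> m x - u x) (\<lambda>x. deriv (\<phi> m) x - g x) +
      2 * energy (\<lambda>x. u x - \<phi> n x) (\<lambda>x. g x - deriv (\<phi> n) x)"
    by (intro energy_add_le) measurable
  also have "\<dots> = 2 * ennreal (e m) + 2 * ennreal (e n)"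
    by (simp only: approximation_error approximation_error_commute)
  also have "\<dots> = ennreal (2 * e m + 2 * e n)"
    using error_nonneg by (simp add: ennreal_plus ennreal_mult)
  finally show ?thesis
    using error_nonneg by (intro enn2real_leI) auto
qed

lemma energy_approximant_le:
  assumes "energy u g = ennreal N" "0 \<le> N"
  shows "enn2real (energy (\<phi> n) (deriv (\<phi> n))) \<le> 2 * e n + 2 * N"
proof -
  have "energy (\<phi> n) (deriv (\<phi> n)) =
      energy (\<lambda>x. (\<phi> n x - u x) + u x) (\<lambda>x. (deriv (\<phi> n) x - g x) + g x)"
    by simp
  also have "\<dots> \<le> 2 * energy (\<lambda>x. \<phi> n x - u x) (\<lambda>x. deriv (\<phi> n) x - g x) + 2 * energy u g"
    by (intro energy_add_le) measurable
  also have "\<dots> = 2 * ennreal (e n) + 2 * ennreal N"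
    by (simp only: approximation_error assms(1))
  also have "\<dots> = ennreal (2 * e n + 2 * N)"
    using error_nonneg assms(2) by (simp add: ennreal_plus ennreal_mult)
  finally show ?thesis
    using error_nonneg assms(2) by (intro enn2real_leI) auto
qed

lemma sobolev_bounds_approximant_diff:
  "sobolev_bounds (2 * e m + 2 * e n) (\<lambda>x. \<phi> m x - \<phi> n x)"
proof -
  obtain L1 L2 where "C1_vanishing_outside L1 (\<phi> m)" "C1_vanishing_outside L2 (\<phi> n)"
    by (metis C1_approximant)
  then have "C1_vanishing_outside (max L1 L2) (\<phi> m)" "C1_vanishing_outside (max L1 L2) (\<phi> n)"
    by (auto elim: C1_vanishing_outside_mono)
  note diff = C1_vanishing_outside_diff[OF this]
  show ?thesis
    using sobolev_bounds_C1[OF diff(1)] energy_approximant_diff_le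
    unfolding diff(2) by (rule sobolev_bounds_mono)
qed

lemma uniformly_Cauchy_approximants: "uniformly_Cauchy_on UNIV \<phi>"
proof (rule uniformly_Cauchy_onI)
  fix \<epsilon> :: real assume "0 < \<epsilon>"
  have "(\<lambda>n. sqrt (4 * e n / sqrt v0)) \<longlonglongrightarrow> sqrt (4 * 0 / sqrt v0)"
    by (intro tendsto_intros error_tendsto_0) (use v0_pos in simp)
  then have "eventually (\<lambda>n. sqrt (4 * e n / sqrt v0) < \<epsilon>) sequentially"
    by (rule order_tendstoD(2)) (use \<open>0 < \<epsilon>\<close> in simp)
  then obtain N where N: "\<And>n. N \<le> n \<Longrightarrow> sqrt (4 * e n / sqrt v0) < \<epsilon>"
    unfolding eventually_sequentially by blast
  have "dist (\<phi> m x) (\<phi> n x) < \<epsilon>" if "N \<le> m" "N \<le> n" for m n x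
  proof -
    have "\<bar>\<phi> m x - \<phi> n x\<bar> \<le> sqrt ((2 * e m + 2 * e n) / sqrt v0)"
      by (rule sobolev_bounds_abs_le[OF sobolev_bounds_approximant_diff])
    also have "\<dots> \<le> sqrt (4 * max (e m) (e n) / sqrt v0)"
      using v0_pos by (intro real_sqrt_le_mono divide_right_mono) auto
    also have "\<dots> < \<epsilon>"
      using N that by (cases "e m \<le> e n") (auto simp: max_def)
    finally show ?thesis
      by (simp add: dist_real_def)
  qed
  then show "\<exists>M. \<forall>x\<in>UNIV. \<forall>m\<ge>M. \<forall>n\<ge>M. dist (\<phi> m x) (\<phi> n x) < \<epsilon>"
    by blast
qed

definition approximant_limit :: "real \<Rightarrow> real" where
  "approximant_limit x = lim (\<lambda>n. \<phi> n x)"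

lemma uniform_limit_approximants: "uniform_limit UNIV \<phi> approximant_limit sequentially"
proof -
  obtain w where w: "uniform_limit UNIV \<phi> w sequentially"
    using Cauchy_uniformly_convergent[OF uniformly_Cauchy_approximants]
    unfolding uniformly_convergent_on_def by blast
  then have "w = approximant_limit"
    unfolding approximant_limit_def fun_eq_iff by (metis UNIV_I limI tendsto_uniform_limitI)
  then show ?thesis
    using w by simp
qed

lemma approximants_tendsto: "(\<lambda>n. \<phi> n x) \<longlonglongrightarrow> approximant_limit x"
  using tendsto_uniform_limitI[OF uniform_limit_approximants] by simp

lemma continuous_approximant_limit: "continuous_on UNIV approximant_limit"
  using continuous_approximant by (intro uniform_limit_theorem[OF _ uniform_limit_approximants]) auto

lemma approximant_limit_measurable [measurable]: "approximant_limit \<in> borel_measurable lborel"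
  using continuous_approximant_limit by (simp add: borel_measurable_continuous_onI)

lemma AE_eq_approximant_limit: "AE x in lborel. u x = approximant_limit x"
proof -
  let ?d = "\<lambda>f x. V x * (f x - u x)\<^sup>2"
  have "(\<integral>\<^sup>+x. ennreal (?d approximant_limit x) \<partial>lborel) \<le>
      liminf (\<lambda>n. \<integral>\<^sup>+x. ennreal (?d (\<phi> n) x) \<partial>lborel)"
    by (intro nn_integral_pointwise_limit_le_liminf tendsto_intros approximants_tendsto) measurable
  also have "\<dots> \<le> liminf (\<lambda>n. ennreal (e n))"
  proof (intro Liminf_mono always_eventually allI)
    fix n
    show "(\<integral>\<^sup>+x. ennreal (?d (\<phi> n) x) \<partial>lborel) \<le> ennreal (e n)"
      unfolding approximation_error[symmetric] energy_def energy_density_def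
      by (intro nn_integral_mono ennreal_leI) simp
  qed
  also have "\<dots> = 0"
    using error_tendsto_0 by (simp add: lim_imp_Liminf tendsto_ennrealI[of _ 0, simplified])
  finally have "(\<integral>\<^sup>+x. ennreal (?d approximant_limit x) \<partial>lborel) = 0"
    by simp
  then have "AE x in lborel. ennreal (?d approximant_limit x) = 0"
    by (subst (asm) nn_integral_0_iff_AE) measurable
  then show ?thesis
  proof eventually_elim
    case (elim x)
    then show ?case
      using V_pos[of x] by (simp add: ennreal_eq_0_iff mult_le_0_iff)
  qed
qed

lemma sobolev_bounds_approximant_limit:
  assumes "energy u g = ennreal N" "0 \<le> N"
  shows "sobolev_bounds (2 * N) approximant_limit"
proof (rule sobolev_bounds_limit[OF approximants_tendsto])
  show "(\<lambda>n. 2 * e n + 2 * N) \<longlonglongrightarrow> 2 * N"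
    using tendsto_add[OF tendsto_mult_right_zero[OF error_tendsto_0] tendsto_const] by simp
  have "sobolev_bounds (2 * e n + 2 * N) (\<phi> n)" for n
    by (rule C1_approximant[of n], rule sobolev_bounds_mono[OF sobolev_bounds_C1])
       (use energy_approximant_le[OF assms] in auto)
  then show "eventually (\<lambda>n. sobolev_bounds (2 * e n + 2 * N) (\<phi> n)) sequentially"
    by simp
qed

(* Integration by parts turns the cross term of phi n' against phi m' into that of phi n'' against
   phi m, which is small once phi m is; the remaining term is an energy difference. *)
lemma integral_deriv_approximant_sq_le:
  assumes f: "C1_vanishing_outside L (\<phi> n)" and df: "C1_vanishing_outside L (deriv (\<phi> n))"
    and small: "\<And>x. \<bar>\<phi> m x\<bar> \<le> \<epsilon>"
  defines "a \<equiv> - \<bar>L\<bar> - 1" and "b \<equiv> \<bar>L\<bar> + 1"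
  shows "integral {a..b} (\<lambda>x. (deriv (\<phi> n) x)\<^sup>2) \<le>
    2 * e n + 2 * e m + 2 * \<epsilon> * integral {a..b} (\<lambda>x. \<bar>deriv (deriv (\<phi> n)) x\<bar>)"
proof -
  define \<psi> where "\<psi> = deriv (\<phi> n)"
  obtain L' where h: "C1_vanishing_outside L' (\<phi> m)"
    by (rule C1_approximant)
  have "C1_vanishing_outside (max L L') (\<phi> n)" "C1_vanishing_outside (max L L') (\<phi> m)"
    using f h by (auto elim: C1_vanishing_outside_mono)
  note diff = C1_vanishing_outside_diff[OF this]
  note cont = C1_vanishing_outside_continuous[OF df, folded \<psi>_def]
    C1_vanishing_outside_continuous_deriv[OF h]
  have int: "k integrable_on {a..b}" if "continuous_on UNIV k" for k :: "real \<Rightarrow> real"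
    by (rule integrable_continuous_interval) (rule continuous_on_subset[OF that], simp)
  have "integral {a..b} (\<lambda>x. (\<psi> x)\<^sup>2) \<le>
      integral {a..b} (\<lambda>x. (\<psi> x - deriv (\<phi> m) x)\<^sup>2 + 2 * (\<psi> x * deriv (\<phi> m) x))"
    by (intro integral_le int continuous_intros cont) (auto simp: power2_diff)
  also have "\<dots> = integral {a..b} (\<lambda>x. (\<psi> x - deriv (\<phi> m) x)\<^sup>2) +
      2 * integral {a..b} (\<lambda>x. \<psi> x * deriv (\<phi> m) x)"
    by (subst integral_add) (auto intro!: int continuous_intros cont)
  also have "integral {a..b} (\<lambda>x. (\<psi> x - deriv (\<phi> m) x)\<^sup>2) \<le>
      integral {a..b} (energy_density (\<lambda>x. \<phi> n x - \<phi> m x) (deriv (\<lambda>x. \<phi> n x - \<phi> m x)))"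
    unfolding diff(2) energy_density_def \<psi>_def[symmetric]
    by (intro integral_le int continuous_intros cont continuous_V C1_vanishing_outside_continuous[OF f]
        C1_vanishing_outside_continuous[OF h]) (auto simp: V_pos less_imp_le)
  also have "\<dots> \<le> 2 * e n + 2 * e m"
    using integral_le_energy_C1[OF diff(1), of a b] energy_approximant_diff_le[of n m]
    unfolding diff(2) a_def b_def by simp
  also have "integral {a..b} (\<lambda>x. \<psi> x * deriv (\<phi> m) x) \<le>
      \<epsilon> * integral {a..b} (\<lambda>x. \<bar>deriv \<psi> x\<bar>)"
    using abs_integral_mult_deriv_le[OF df h, folded \<psi>_def, of a b \<epsilon>] small
      C1_vanishing_outside_eq_0[OF df, folded \<psi>_def]
    unfolding a_def b_def by auto
  finally show ?thesis
    unfolding \<psi>_def by simp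
qed

lemma nn_integral_deriv_approximant_sq_le:
  assumes unif0: "uniform_limit UNIV \<phi> (\<lambda>_. 0) sequentially"
  shows "(\<integral>\<^sup>+x. ennreal ((deriv (\<phi> n) x)\<^sup>2) \<partial>lborel) \<le> ennreal (2 * e n)"
proof -
  obtain L where f: "C1_vanishing_outside L (\<phi> n)" and df: "C1_vanishing_outside L (deriv (\<phi> n))"
    by (rule C1_approximant)
  define a where "a = - \<bar>L\<bar> - 1"
  define b where "b = \<bar>L\<bar> + 1"
  define P where "P = integral {a..b} (\<lambda>x. (deriv (\<phi> n) x)\<^sup>2)"
  define K where "K = integral {a..b} (\<lambda>x. \<bar>deriv (deriv (\<phi> n)) x\<bar>)"
  have K: "0 \<le> K"
    unfolding K_def using C1_vanishing_outside_continuous_deriv[OF df]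
    by (intro integral_nonneg integrable_continuous_interval continuous_intros) (auto intro: continuous_on_subset)
  have approx: "P \<le> 2 * e n + 2 * \<epsilon> * K" if "0 < \<epsilon>" for \<epsilon>
  proof -
    obtain N where "\<And>m x. N \<le> m \<Longrightarrow> \<bar>\<phi> m x\<bar> < \<epsilon>"
      using unif0 \<open>0 < \<epsilon>\<close> unfolding uniform_limit_sequentially_iff dist_real_def by fastforce
    then have "eventually (\<lambda>m. P \<le> 2 * e n + 2 * e m + 2 * \<epsilon> * K) sequentially"
      unfolding eventually_sequentially P_def K_def a_def b_def
      by (metis integral_deriv_approximant_sq_le[OF f df] less_imp_le)
    moreover have "(\<lambda>m. 2 * e n + 2 * e m + 2 * \<epsilon> * K) \<longlonglongrightarrow> 2 * e n + 2 * 0 + 2 * \<epsilon> * K"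
      by (intro tendsto_intros error_tendsto_0)
    ultimately show ?thesis
      using tendsto_lowerbound by fastforce
  qed
  have "P \<le> 2 * e n"
  proof (rule field_le_epsilon)
    fix \<delta> :: real assume "0 < \<delta>"
    have "P \<le> 2 * e n + 2 * (\<delta> / (2 * (K + 1))) * K"
      using \<open>0 < \<delta>\<close> K by (intro approx) simp
    also have "\<dots> \<le> 2 * e n + \<delta>"
      using \<open>0 < \<delta>\<close> K by (simp add: field_simps)
    finally show "P \<le> 2 * e n + \<delta>" .
  qed
  moreover have "(\<integral>\<^sup>+x. ennreal ((deriv (\<phi> n) x)\<^sup>2) \<partial>lborel) = ennreal P"
    unfolding P_def using C1_vanishing_outside_eq_0[OF df]
    by (intro nn_integral_eq_integral_vanishing_outside continuous_intros
        continuous_on_subset[OF C1_vanishing_outside_continuous[OF df]]) (auto simp: a_def b_def)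
  ultimately show ?thesis
    by (simp add: ennreal_leI)
qed

lemma nn_integral_sq_le_approximation_error:
  assumes "uniform_limit UNIV \<phi> (\<lambda>_. 0) sequentially"
  shows "(\<integral>\<^sup>+x. ennreal ((g x)\<^sup>2) \<partial>lborel) \<le> ennreal (6 * e n)"
proof -
  have "(\<integral>\<^sup>+x. ennreal ((g x)\<^sup>2) \<partial>lborel) \<le>
      2 * energy (\<lambda>x. \<phi> n x - u x) (\<lambda>x. deriv (\<phi> n) x - g x) +
      2 * (\<integral>\<^sup>+x. ennreal ((deriv (\<phi> n) x)\<^sup>2) \<partial>lborel)"
    unfolding energy_def
  proof (rule nn_integral_le_2_add)
    fix x
    have "(g x)\<^sup>2 \<le> 2 * (deriv (\<phi> n) x - g x)\<^sup>2 + 2 * (deriv (\<phi> n) x)\<^sup>2"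
      using sum_squares_ge_zero[of "2 * deriv (\<phi> n) x - g x" 0]
      by (simp add: power2_eq_square algebra_simps)
    then show "(g x)\<^sup>2 \<le> 2 * energy_density (\<lambda>x. \<phi> n x - u x) (\<lambda>x. deriv (\<phi> n) x - g x) x +
        2 * (deriv (\<phi> n) x)\<^sup>2"
      unfolding energy_density_def using V_pos[of x] by (smt (verit) mult_nonneg_nonneg zero_le_power2)
  qed (auto simp: energy_density_def intro: energy_density_nonneg[unfolded energy_density_def])
  also have "\<dots> \<le> 2 * ennreal (e n) + 2 * ennreal (2 * e n)"
    unfolding approximation_error
    by (intro add_left_mono mult_left_mono nn_integral_deriv_approximant_sq_le[OF assms]) auto
  also have "\<dots> = ennreal (6 * e n)"
    using error_nonneg[of n] by (simp add: ennreal_mult' flip: ennreal_plus distrib_right)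
  finally show ?thesis .
qed

lemma AE_eq_0_imp_AE_deriv_eq_0:
  assumes "AE x in lborel. u x = 0"
  shows "AE x in lborel. g x = 0"
proof -
  have "AE x in lebesgue. x \<in> {x. approximant_limit x = 0}"
    using assms AE_eq_approximant_limit by (intro AE_completion) (auto elim: AE_mp)
  then have "approximant_limit x = 0" for x
    using mem_closed_if_AE_lebesgue[OF closed_Collect_eq[OF continuous_approximant_limit continuous_on_const]]
    by blast
  then have "approximant_limit = (\<lambda>_. 0)"
    by (rule ext)
  then have "uniform_limit UNIV \<phi> (\<lambda>_. 0) sequentially"
    using uniform_limit_approximants by simp
  moreover have "(\<lambda>n. ennreal (6 * e n)) \<longlonglongrightarrow> ennreal (6 * 0)"
    by (intro tendsto_intros error_tendsto_0)
  ultimately have "(\<integral>\<^sup>+x. ennreal ((g x)\<^sup>2) \<partial>lborel) \<le> 0"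
    using nn_integral_sq_le_approximation_error by (intro tendsto_lowerbound) (auto intro: always_eventually)
  then have "(\<integral>\<^sup>+x. ennreal ((g x)\<^sup>2) \<partial>lborel) = 0"
    by simp
  then have "AE x in lborel. ennreal ((g x)\<^sup>2) = 0"
    by (subst (asm) nn_integral_0_iff_AE) measurable
  then show ?thesis
    by eventually_elim simp
qed

end

context potential
begin

lemma H1V_injective: "H1V_injective V"
proof -
  have "AE x in lborel. g x = 0" if ug: "(u, g) \<in> H1V V" and "AE x in lborel. u x = 0" for u g
  proof -
    obtain \<phi> e where "C1_approximation V v0 u g \<phi> e"
      using H1V_C1_approximation[OF ug] .
    then show ?thesis
      using C1_approximation.AE_eq_0_imp_AE_deriv_eq_0 \<open>AE x in lborel. u x = 0\<close> by blast
  qed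
  then show ?thesis
    unfolding H1V_injective_def by blast
qed

lemma H1V_continuous_representative:
  assumes "(u, g) \<in> H1V V"
  obtains w where "continuous_on UNIV w" "AE x in lborel. u x = w x"
    "sobolev_bounds (2 * (H1V_norm V (u, g))\<^sup>2) w"
proof -
  obtain \<phi> e where "C1_approximation V v0 u g \<phi> e"
    using H1V_C1_approximation[OF assms] .
  then interpret C1_approximation V v0 u g \<phi> e .
  show thesis
    using that continuous_approximant_limit AE_eq_approximant_limit
      sobolev_bounds_approximant_limit[OF energy_eq_H1V_norm[OF assms]] by simp
qed

lemma H1V_AE_abs_le:
  assumes "(u, g) \<in> H1V V"
  shows "AE x in lborel. \<bar>u x\<bar> \<le> sqrt (2 / sqrt v0) * H1V_norm V (u, g)"
proof -
  obtain w where ae: "AE x in lborel. u x = w x" and w: "sobolev_bounds (2 * (H1V_norm V (u, g))\<^sup>2) w"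
    using H1V_continuous_representative[OF assms] by blast
  have sqrt_eq: "sqrt (2 * n\<^sup>2 / sqrt v0) = sqrt (2 / sqrt v0) * n" if "0 \<le> n" for n :: real
  proof -
    have "sqrt (2 * n\<^sup>2 / sqrt v0) = sqrt (2 / sqrt v0 * n\<^sup>2)"
      by simp
    also have "\<dots> = sqrt (2 / sqrt v0) * n"
      using that by (simp only: real_sqrt_mult real_sqrt_abs abs_of_nonneg)
    finally show ?thesis .
  qed
  have "sqrt (2 * (H1V_norm V (u, g))\<^sup>2 / sqrt v0) = sqrt (2 / sqrt v0) * H1V_norm V (u, g)"
    by (rule sqrt_eq) (simp add: H1V_norm_def)
  then show ?thesis
    using ae sobolev_bounds_abs_le[OF w] by (auto elim: AE_mp)
qed

lemma nn_integral_V_sq_le_H1V_norm: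
  assumes "(u, g) \<in> H1V V"
  shows "(\<integral>\<^sup>+x. ennreal (V x * (u x)\<^sup>2) \<partial>lborel) \<le> ennreal ((H1V_norm V (u, g))\<^sup>2)"
  unfolding energy_eq_H1V_norm[OF assms, symmetric] energy_def energy_density_def
  by (intro nn_integral_mono ennreal_leI) simp

lemma LtauV_int_le:
  assumes "2 \<le> \<tau>" and [measurable]: "u \<in> borel_measurable lborel"
    and "AE x in lborel. \<bar>u x\<bar> \<le> K"
  shows "LtauV_int V \<tau> u \<le> ennreal (K powr (\<tau> - 2)) * (\<integral>\<^sup>+x. ennreal (V x * (u x)\<^sup>2) \<partial>lborel)"
proof -
  have "LtauV_int V \<tau> u \<le> (\<integral>\<^sup>+x. ennreal (K powr (\<tau> - 2)) * ennreal (V x * (u x)\<^sup>2) \<partial>lborel)"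
    unfolding LtauV_int_def
  proof (rule nn_integral_mono_AE)
    show "AE x in lborel. ennreal (V x * \<bar>u x\<bar> powr \<tau>) \<le> ennreal (K powr (\<tau> - 2)) * ennreal (V x * (u x)\<^sup>2)"
      using assms(3)
    proof eventually_elim
      case (elim x)
      have "V x * \<bar>u x\<bar> powr \<tau> \<le> V x * ((u x)\<^sup>2 * K powr (\<tau> - 2))"
        using V_pos[of x] by (intro mult_left_mono abs_powr_le_sq_mult_powr[OF assms(1) elim]) auto
      then show ?case
        using V_pos[of x] by (simp add: ennreal_mult'[symmetric] mult_ac ennreal_leI)
    qed
  qed
  also have "\<dots> = ennreal (K powr (\<tau> - 2)) * (\<integral>\<^sup>+x. ennreal (V x * (u x)\<^sup>2) \<partial>lborel)"
    by (rule nn_integral_cmult) measurable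
  finally show ?thesis .
qed

lemma LtauV_int_tendsto_0:
  assumes "2 < \<tau>" and [measurable]: "\<And>k. u k \<in> borel_measurable lborel"
    and L2: "\<And>k. (\<integral>\<^sup>+x. ennreal (V x * (u k x)\<^sup>2) \<partial>lborel) \<le> ennreal N"
    and small: "\<And>\<epsilon>. 0 < \<epsilon> \<Longrightarrow> eventually (\<lambda>k. AE x in lborel. \<bar>u k x\<bar> \<le> \<epsilon>) sequentially"
  shows "(\<lambda>k. LtauV_int V \<tau> (u k)) \<longlonglongrightarrow> 0"
proof (rule tendsto_0_ennrealI)
  fix \<delta> :: real assume "0 < \<delta>"
  define \<epsilon> where "\<epsilon> = (\<delta> / (\<bar>N\<bar> + 1)) powr (1 / (\<tau> - 2))"
  have pos: "0 < \<bar>N\<bar> + 1"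
    by (simp add: add_nonneg_pos)
  have \<epsilon>_powr: "\<epsilon> powr (\<tau> - 2) = \<delta> / (\<bar>N\<bar> + 1)"
    unfolding \<epsilon>_def using \<open>0 < \<delta>\<close> pos assms(1) by (simp add: powr_powr)
  have "\<epsilon> powr (\<tau> - 2) * N \<le> \<delta> / (\<bar>N\<bar> + 1) * (\<bar>N\<bar> + 1)"
    unfolding \<epsilon>_powr using \<open>0 < \<delta>\<close> pos by (intro mult_left_mono) auto
  then have \<epsilon>: "0 < \<epsilon>" "\<epsilon> powr (\<tau> - 2) * N \<le> \<delta>"
    using \<open>0 < \<delta>\<close> pos by (auto simp: \<epsilon>_def)
  show "eventually (\<lambda>k. LtauV_int V \<tau> (u k) \<le> ennreal \<delta>) sequentially"
    using small[OF \<epsilon>(1)]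
  proof eventually_elim
    case (elim k)
    have "LtauV_int V \<tau> (u k) \<le> ennreal (\<epsilon> powr (\<tau> - 2)) * (\<integral>\<^sup>+x. ennreal (V x * (u k x)\<^sup>2) \<partial>lborel)"
      using assms(1) elim by (intro LtauV_int_le) auto
    also have "\<dots> \<le> ennreal (\<epsilon> powr (\<tau> - 2)) * ennreal N"
      using L2 by (rule mult_left_mono) simp
    also have "\<dots> \<le> ennreal \<delta>"
      using \<epsilon>(2) by (simp add: ennreal_mult'[symmetric] ennreal_leI)
    finally show ?case .
  qed
qed

lemma H1V_measurable:
  assumes "ug \<in> H1V V"
  shows "fst ug \<in> borel_measurable lborel"
  using assms unfolding H1V_def by auto

lemma LtauV_int_le_H1V_norm:
  assumes "2 \<le> \<tau>" "ug \<in> H1V V"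
  shows "LtauV_int V \<tau> (fst ug) \<le> ennreal ((max (sqrt (2 / sqrt v0)) 1 * H1V_norm V ug) powr \<tau>)"
proof -
  obtain u g where ug: "ug = (u, g)"
    by (cases ug)
  define K where "K = sqrt (2 / sqrt v0)"
  define n where "n = H1V_norm V (u, g)"
  have K: "0 \<le> K" and n: "0 \<le> n"
    unfolding K_def n_def H1V_norm_def using v0_pos by auto
  have "LtauV_int V \<tau> u \<le> ennreal ((K * n) powr (\<tau> - 2)) * (\<integral>\<^sup>+x. ennreal (V x * (u x)\<^sup>2) \<partial>lborel)"
    using assms H1V_measurable[OF assms(2)] H1V_AE_abs_le[of u g]
    unfolding ug K_def n_def by (intro LtauV_int_le) auto
  also have "\<dots> \<le> ennreal ((K * n) powr (\<tau> - 2)) * ennreal (n\<^sup>2)"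
    using assms(2) nn_integral_V_sq_le_H1V_norm[of u g] unfolding ug n_def by (intro mult_left_mono) auto
  also have "\<dots> \<le> ennreal ((max K 1 * n) powr \<tau>)"
    using K n assms(1) by (simp add: ennreal_mult'[symmetric] ennreal_leI powr_mult_sq_le_max_powr)
  finally show ?thesis
    unfolding ug K_def n_def by simp
qed

lemma nn_integral_V_sq_le_bound:
  assumes "ug \<in> H1V V" "H1V_norm V ug \<le> B"
  shows "(\<integral>\<^sup>+x. ennreal (V x * (fst ug x)\<^sup>2) \<partial>lborel) \<le> ennreal (B\<^sup>2)"
proof -
  obtain u g where ug: "ug = (u, g)"
    by (cases ug)
  have "(\<integral>\<^sup>+x. ennreal (V x * (u x)\<^sup>2) \<partial>lborel) \<le> ennreal ((H1V_norm V (u, g))\<^sup>2)"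
    using assms(1) unfolding ug by (rule nn_integral_V_sq_le_H1V_norm)
  also have "\<dots> \<le> ennreal (B\<^sup>2)"
    using assms(2) unfolding ug by (intro ennreal_leI power_mono) (auto simp: H1V_norm_def)
  finally show ?thesis
    unfolding ug by simp
qed

lemma nn_integral_V_sq_diff_le:
  assumes "ug \<in> H1V V" "H1V_norm V ug \<le> B"
    and [measurable]: "w \<in> borel_measurable lborel"
    and "(\<integral>\<^sup>+x. ennreal (V x * (w x)\<^sup>2) \<partial>lborel) \<le> ennreal (B\<^sup>2)"
  shows "(\<integral>\<^sup>+x. ennreal (V x * (fst ug x - w x)\<^sup>2) \<partial>lborel) \<le> ennreal (4 * B\<^sup>2)"
proof -
  have [measurable]: "fst ug \<in> borel_measurable lborel"
    using assms(1) by (rule H1V_measurable)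
  have "(\<integral>\<^sup>+x. ennreal (V x * (fst ug x - w x)\<^sup>2) \<partial>lborel) \<le>
      2 * (\<integral>\<^sup>+x. ennreal (V x * (fst ug x)\<^sup>2) \<partial>lborel) + 2 * (\<integral>\<^sup>+x. ennreal (V x * (w x)\<^sup>2) \<partial>lborel)"
  proof (rule nn_integral_le_2_add)
    fix x
    have "(p - q)\<^sup>2 \<le> 2 * p\<^sup>2 + 2 * q\<^sup>2" for p q :: real
      using sum_squares_ge_zero[of "p + q" 0] by (simp add: power2_eq_square algebra_simps)
    then have "V x * (fst ug x - w x)\<^sup>2 \<le> V x * (2 * (fst ug x)\<^sup>2 + 2 * (w x)\<^sup>2)"
      using V_pos[of x] by (intro mult_left_mono) auto
    then show "V x * (fst ug x - w x)\<^sup>2 \<le> 2 * (V x * (fst ug x)\<^sup>2) + 2 * (V x * (w x)\<^sup>2)"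
      by (simp add: algebra_simps)
  qed (auto simp: V_pos less_imp_le)
  also have "\<dots> \<le> 2 * ennreal (B\<^sup>2) + 2 * ennreal (B\<^sup>2)"
    using assms by (intro add_mono mult_left_mono nn_integral_V_sq_le_bound) auto
  also have "\<dots> = ennreal (4 * B\<^sup>2)"
    by (simp add: ennreal_mult' flip: ennreal_plus distrib_right)
  finally show ?thesis .
qed

end

section \<open>Compact embeddings\<close>

locale coercive_potential = potential +
  assumes coercive: "filterlim V at_top at_infinity"
begin

lemma V_ge_far_out: obtains R where "\<And>t. R \<le> \<bar>t\<bar> \<Longrightarrow> M \<le> V t"
proof -
  have "eventually (\<lambda>t. M \<le> V t) at_infinity"
    using coercive by (simp add: filterlim_at_top)
  then show thesis
    using that unfolding eventually_at_infinity real_norm_def by blast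
qed

lemma sobolev_bounds_vanish_at_infinity:
  assumes "0 < \<epsilon>"
  obtains R where "\<And>w x. sobolev_bounds b w \<Longrightarrow> R \<le> \<bar>x\<bar> \<Longrightarrow> \<bar>w x\<bar> \<le> \<epsilon>"
proof -
  define q where "q = \<bar>b\<bar> / \<epsilon>\<^sup>2 + 1"
  have "q * \<epsilon>\<^sup>2 = \<bar>b\<bar> + \<epsilon>\<^sup>2"
    using assms unfolding q_def by (simp add: field_simps)
  moreover have "0 < \<epsilon>\<^sup>2"
    using assms by simp
  ultimately have q: "0 < q" "b < q * \<epsilon>\<^sup>2"
    using abs_ge_self[of b] unfolding q_def by (simp add: add_nonneg_pos, linarith)
  obtain R where R: "\<And>t. R \<le> \<bar>t\<bar> \<Longrightarrow> q\<^sup>2 \<le> V t"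
    using V_ge_far_out[of "q\<^sup>2"] by blast
  have "\<bar>w x\<bar> \<le> \<epsilon>" if "sobolev_bounds b w" "R \<le> \<bar>x\<bar>" for w x
  proof -
    have far: "\<forall>t. \<bar>x\<bar> \<le> \<bar>t\<bar> \<longrightarrow> q\<^sup>2 \<le> V t"
      using R that(2) by auto
    have bound: "\<And>M. 0 < M \<Longrightarrow> (\<forall>t. \<bar>x\<bar> \<le> \<bar>t\<bar> \<longrightarrow> M \<le> V t) \<Longrightarrow> sqrt M * (w x)\<^sup>2 \<le> b"
      using that(1) unfolding sobolev_bounds_def by blast
    have "sqrt (q\<^sup>2) * (w x)\<^sup>2 \<le> b"
      by (rule bound) (use far q(1) in auto)
    then have "q * (w x)\<^sup>2 \<le> b"
      using q by simp
    then have "q * (w x)\<^sup>2 < q * \<epsilon>\<^sup>2"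
      using q by linarith
    then have "\<bar>w x\<bar>\<^sup>2 < \<epsilon>\<^sup>2"
      using q by simp
    then have "\<bar>w x\<bar> < \<epsilon>"
      by (rule power2_less_imp_less) (use assms in simp)
    then show ?thesis
      by simp
  qed
  then show thesis
    by (rule that)
qed

lemma sobolev_bounds_uniformly_convergent_subseq:
  fixes F :: "nat \<Rightarrow> real \<Rightarrow> real"
  assumes "0 \<le> b" "\<And>n. sobolev_bounds b (F n)"
  obtains k w where "strict_mono k" "uniform_limit UNIV (F \<circ> k) w sequentially"
proof -
  have bounded: "\<bar>F n x\<bar> \<le> sqrt (b / sqrt v0)" for n x
    by (rule sobolev_bounds_abs_le[OF assms(2)])
  have equicont: "\<exists>d>0. \<forall>n x y. \<bar>x - y\<bar> < d \<longrightarrow> \<bar>F n x - F n y\<bar> < e" if e: "0 < e" for e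
  proof -
    obtain d where d: "0 < d" "\<And>w x y. sobolev_bounds b w \<Longrightarrow> \<bar>x - y\<bar> < d \<Longrightarrow> \<bar>w x - w y\<bar> < e"
      using sobolev_bounds_equicontinuous[OF e assms(1)] by blast
    show ?thesis
      using d(2)[OF assms(2)] by (intro exI[of _ d] conjI allI impI d(1))
  qed
  have tail: "\<exists>R. \<forall>n x. R \<le> \<bar>x\<bar> \<longrightarrow> \<bar>F n x\<bar> \<le> \<epsilon>" if \<epsilon>: "0 < \<epsilon>" for \<epsilon>
  proof -
    obtain R where R: "\<And>w x. sobolev_bounds b w \<Longrightarrow> R \<le> \<bar>x\<bar> \<Longrightarrow> \<bar>w x\<bar> \<le> \<epsilon>"
      using sobolev_bounds_vanish_at_infinity[OF \<epsilon>] by blast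
    show ?thesis
      using R[OF assms(2)] by (intro exI[of _ R] allI impI)
  qed
  show thesis
    by (rule uniformly_convergent_subseq_vanishing_at_infinity[OF bounded equicont tail]) (assumption | rule that)+
qed

lemma H1V_bounded_uniformly_convergent_subseq:
  fixes s :: "nat \<Rightarrow> (real \<Rightarrow> real) \<times> (real \<Rightarrow> real)"
  assumes "\<And>n. s n \<in> H1V V" "\<And>n. H1V_norm V (s n) \<le> B"
  obtains r F w where "strict_mono r" "\<forall>n. continuous_on UNIV (F n)" "\<forall>n. AE x in lborel. fst (s n) x = F n x"
    "uniform_limit UNIV (F \<circ> r) w sequentially" "continuous_on UNIV w" "sobolev_bounds (2 * B\<^sup>2) w"
proof -
  have "\<forall>n. \<exists>w. continuous_on UNIV w \<and> (AE x in lborel. fst (s n) x = w x) \<and> sobolev_bounds (2 * B\<^sup>2) w"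
  proof
    fix n
    obtain u g where sn: "s n = (u, g)"
      by (cases "s n")
    have "0 \<le> H1V_norm V (s n)"
      by (simp add: H1V_norm_def)
    then have B: "2 * (H1V_norm V (u, g))\<^sup>2 \<le> 2 * B\<^sup>2"
      using assms(2)[of n] unfolding sn by (simp add: power_mono)
    obtain w where "continuous_on UNIV w" "AE x in lborel. u x = w x"
      "sobolev_bounds (2 * (H1V_norm V (u, g))\<^sup>2) w"
      using H1V_continuous_representative[of u g] assms(1)[of n] unfolding sn by blast
    then show "\<exists>w. continuous_on UNIV w \<and> (AE x in lborel. fst (s n) x = w x) \<and> sobolev_bounds (2 * B\<^sup>2) w"
      using sobolev_bounds_mono[OF _ B] unfolding sn by auto
  qed
  then have "\<exists>F. \<forall>n. continuous_on UNIV (F n) \<and> (AE x in lborel. fst (s n) x = F n x) \<and>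
      sobolev_bounds (2 * B\<^sup>2) (F n)"
    by (rule choice)
  then obtain F where F: "\<And>n. continuous_on UNIV (F n)" "\<And>n. AE x in lborel. fst (s n) x = F n x"
    "\<And>n. sobolev_bounds (2 * B\<^sup>2) (F n)"
    by blast
  obtain r w where r: "strict_mono r" and w: "uniform_limit UNIV (F \<circ> r) w sequentially"
    by (rule sobolev_bounds_uniformly_convergent_subseq[of "2 * B\<^sup>2" F]) (use F(3) in auto)
  have "continuous_on UNIV w"
    using F(1) by (intro uniform_limit_theorem[OF _ w]) auto
  moreover have "sobolev_bounds (2 * B\<^sup>2) w"
    using tendsto_uniform_limitI[OF w] F(3)
    by (intro sobolev_bounds_limit[where f = "F \<circ> r" and b = "\<lambda>_. 2 * B\<^sup>2"]) auto
  ultimately show thesis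
    using that r F(1,2) w by blast
qed

lemma H1V_bounded_convergent_subseq:
  fixes s :: "nat \<Rightarrow> (real \<Rightarrow> real) \<times> (real \<Rightarrow> real)"
  assumes "\<And>n. s n \<in> H1V V" "\<And>n. H1V_norm V (s n) \<le> B"
  obtains r w where "strict_mono r" "continuous_on UNIV w" "\<forall>x. \<bar>w x\<bar> \<le> sqrt (2 * B\<^sup>2 / sqrt v0)"
    "(\<integral>\<^sup>+x. ennreal (V x * (w x)\<^sup>2) \<partial>lborel) \<le> ennreal (B\<^sup>2)"
    "\<forall>\<epsilon>>0. eventually (\<lambda>k. AE x in lborel. \<bar>fst (s (r k)) x - w x\<bar> \<le> \<epsilon>) sequentially"
proof -
  obtain r F w where r: "strict_mono r" and F_cont: "\<forall>n. continuous_on UNIV (F n)"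
    and F: "\<forall>n. AE x in lborel. fst (s n) x = F n x"
    and w: "uniform_limit UNIV (F \<circ> r) w sequentially" "continuous_on UNIV w" "sobolev_bounds (2 * B\<^sup>2) w"
    by (rule H1V_bounded_uniformly_convergent_subseq[OF assms])
  have F_measurable [measurable]: "F n \<in> borel_measurable lborel" for n
    using F_cont by (simp add: borel_measurable_continuous_onI)
  have "(\<integral>\<^sup>+x. ennreal (V x * (w x)\<^sup>2) \<partial>lborel) \<le>
      liminf (\<lambda>k. \<integral>\<^sup>+x. ennreal (V x * (F (r k) x)\<^sup>2) \<partial>lborel)"
    using tendsto_uniform_limitI[OF w(1)]
    by (intro nn_integral_pointwise_limit_le_liminf tendsto_intros) (auto simp: o_def)
  also have "\<dots> \<le> ennreal (B\<^sup>2)"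
  proof (rule Liminf_le)
    have "(\<integral>\<^sup>+x. ennreal (V x * (F (r k) x)\<^sup>2) \<partial>lborel) \<le> ennreal (B\<^sup>2)" for k
    proof -
      have "(\<integral>\<^sup>+x. ennreal (V x * (F (r k) x)\<^sup>2) \<partial>lborel) =
          (\<integral>\<^sup>+x. ennreal (V x * (fst (s (r k)) x)\<^sup>2) \<partial>lborel)"
        using F[rule_format, of "r k"] by (intro nn_integral_cong_AE) (auto elim: AE_mp)
      also have "\<dots> \<le> ennreal (B\<^sup>2)"
        using assms by (intro nn_integral_V_sq_le_bound)
      finally show ?thesis .
    qed
    then show "eventually (\<lambda>k. (\<integral>\<^sup>+x. ennreal (V x * (F (r k) x)\<^sup>2) \<partial>lborel) \<le> ennreal (B\<^sup>2)) sequentially"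
      by simp
  qed simp
  finally have "(\<integral>\<^sup>+x. ennreal (V x * (w x)\<^sup>2) \<partial>lborel) \<le> ennreal (B\<^sup>2)" .
  moreover have "eventually (\<lambda>k. AE x in lborel. \<bar>fst (s (r k)) x - w x\<bar> \<le> \<epsilon>) sequentially" if "0 < \<epsilon>" for \<epsilon>
  proof -
    have "eventually (\<lambda>k. \<forall>x. \<bar>F (r k) x - w x\<bar> < \<epsilon>) sequentially"
      using w(1) that unfolding uniform_limit_iff dist_real_def by auto
    then show ?thesis
    proof eventually_elim
      case (elim k)
      show ?case
        using F[rule_format, of "r k"] by eventually_elim (use elim in \<open>auto intro: less_imp_le\<close>)
    qed
  qed
  ultimately show thesis
    using sobolev_bounds_abs_le[OF w(3)] by (intro that[OF r w(2)]) auto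
qed

lemma H1V_compact_embed_Linf: "compact_embed_Linf V"
  unfolding compact_embed_Linf_def
proof (intro conjI allI impI H1V_injective)
  show "\<exists>C\<ge>0. \<forall>ug\<in>H1V V. AE x in lborel. \<bar>fst ug x\<bar> \<le> C * H1V_norm V ug"
    using H1V_AE_abs_le less_imp_le[OF v0_pos] by (intro exI[of _ "sqrt (2 / sqrt v0)"]) auto
  fix s :: "nat \<Rightarrow> (real \<Rightarrow> real) \<times> (real \<Rightarrow> real)" and B :: real
  assume s: "\<forall>n. s n \<in> H1V V \<and> H1V_norm V (s n) \<le> B"
  obtain r w where r: "strict_mono r" and w: "continuous_on UNIV w"
    "\<forall>x. \<bar>w x\<bar> \<le> sqrt (2 * B\<^sup>2 / sqrt v0)" "(\<integral>\<^sup>+x. ennreal (V x * (w x)\<^sup>2) \<partial>lborel) \<le> ennreal (B\<^sup>2)"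
    and conv: "\<forall>\<epsilon>>0. eventually (\<lambda>k. AE x in lborel. \<bar>fst (s (r k)) x - w x\<bar> \<le> \<epsilon>) sequentially"
    by (rule H1V_bounded_convergent_subseq[of s B]) (use s in auto)
  have "w \<in> borel_measurable lborel"
    using w(1) by (simp add: borel_measurable_continuous_onI)
  moreover have "\<exists>M. AE x in lborel. \<bar>w x\<bar> \<le> M"
    using w(2) by (intro exI AE_I2) blast
  moreover have "\<forall>\<epsilon>>0. \<exists>N. \<forall>k\<ge>N. AE x in lborel. \<bar>fst (s (r k)) x - w x\<bar> \<le> \<epsilon>"
    using conv by (simp add: eventually_sequentially)
  ultimately show "\<exists>(r::nat \<Rightarrow> nat) w. strict_mono r \<and> w \<in> borel_measurable lborel \<and> (\<exists>M. AE x in lborel. \<bar>w x\<bar> \<le> M) \<and>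
      (\<forall>\<epsilon>>0. \<exists>N. \<forall>k\<ge>N. AE x in lborel. \<bar>fst (s (r k)) x - w x\<bar> \<le> \<epsilon>)"
    using r by blast
qed

lemma H1V_compact_embed_LtauV:
  assumes "2 < \<tau>"
  shows "compact_embed_LtauV V \<tau>"
  unfolding compact_embed_LtauV_def
proof (intro conjI allI impI H1V_injective)
  show "\<exists>C\<ge>0. \<forall>ug\<in>H1V V. LtauV_int V \<tau> (fst ug) \<le> ennreal ((C * H1V_norm V ug) powr \<tau>)"
    using LtauV_int_le_H1V_norm assms by (intro exI[of _ "max (sqrt (2 / sqrt v0)) 1"]) auto
  fix s :: "nat \<Rightarrow> (real \<Rightarrow> real) \<times> (real \<Rightarrow> real)" and B :: real
  assume s: "\<forall>n. s n \<in> H1V V \<and> H1V_norm V (s n) \<le> B"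
  obtain r w where r: "strict_mono r" and w: "continuous_on UNIV w"
    "\<forall>x. \<bar>w x\<bar> \<le> sqrt (2 * B\<^sup>2 / sqrt v0)" "(\<integral>\<^sup>+x. ennreal (V x * (w x)\<^sup>2) \<partial>lborel) \<le> ennreal (B\<^sup>2)"
    and conv: "\<forall>\<epsilon>>0. eventually (\<lambda>k. AE x in lborel. \<bar>fst (s (r k)) x - w x\<bar> \<le> \<epsilon>) sequentially"
    by (rule H1V_bounded_convergent_subseq[of s B]) (use s in auto)
  have w_measurable [measurable]: "w \<in> borel_measurable lborel"
    using w(1) by (simp add: borel_measurable_continuous_onI)
  have s_measurable [measurable]: "fst (s n) \<in> borel_measurable lborel" for n
    using s H1V_measurable by blast
  have "LtauV_int V \<tau> w \<le> ennreal (sqrt (2 * B\<^sup>2 / sqrt v0) powr (\<tau> - 2)) *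
      (\<integral>\<^sup>+x. ennreal (V x * (w x)\<^sup>2) \<partial>lborel)"
    using assms w(2) by (intro LtauV_int_le) auto
  also have "\<dots> \<le> ennreal (sqrt (2 * B\<^sup>2 / sqrt v0) powr (\<tau> - 2)) * ennreal (B\<^sup>2)"
    using w(3) by (rule mult_left_mono) simp
  finally have "LtauV_int V \<tau> w \<le> ennreal (sqrt (2 * B\<^sup>2 / sqrt v0) powr (\<tau> - 2)) * ennreal (B\<^sup>2)" .
  then have "LtauV_int V \<tau> w < \<infinity>"
    by (simp add: ennreal_mult_less_top le_less_trans ennreal_mult'[symmetric])
  moreover have "(\<lambda>k. LtauV_int V \<tau> (\<lambda>x. fst (s (r k)) x - w x)) \<longlonglongrightarrow> 0"
  proof (rule LtauV_int_tendsto_0)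
    show "(\<integral>\<^sup>+x. ennreal (V x * (fst (s (r k)) x - w x)\<^sup>2) \<partial>lborel) \<le> ennreal (4 * B\<^sup>2)" for k
      using s w(3) by (intro nn_integral_V_sq_diff_le) auto
  qed (use assms conv in auto)
  ultimately show "\<exists>(r::nat \<Rightarrow> nat) w. strict_mono r \<and> w \<in> borel_measurable lborel \<and> LtauV_int V \<tau> w < \<infinity> \<and>
      (\<lambda>k. LtauV_int V \<tau> (\<lambda>x. fst (s (r k)) x - w x)) \<longlonglongrightarrow> 0"
    using r by (intro exI[of _ r] exI[of _ w] conjI) auto
qed

end

theorem theorem2p11:
  fixes V W :: "real \<Rightarrow> real" and C :: real
  assumes "continuous_on UNIV V"
    and "bdd_below (range V)" and "(INF x. V x) > 0"
    and "filterlim V at_top at_infinity"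
    and "\<And>a b. set_integrable lborel {a..b} W"
    and "\<And>\<phi>. test_fun \<phi> \<Longrightarrow>
           (\<integral>x. V x * deriv \<phi> x \<partial>lborel) = - (\<integral>x. W x * \<phi> x \<partial>lborel)"
    and "C > 0"
    and "AE x in lborel. \<bar>W x\<bar> \<le> C * V x powr (3/2)"
  shows "compact_embed_Linf V \<and> (\<forall>\<tau>>2. compact_embed_LtauV V \<tau>)"
proof -
  interpret coercive_potential V "INF x. V x"
    using assms(1-4) by unfold_locales (auto intro: cINF_lower)
  show ?thesis
    using H1V_compact_embed_Linf H1V_compact_embed_LtauV by blast
qed

end
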